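(* Let $p$ be an odd prime. In the group $H = \langle a,b : a[a^p,b],\ b^p\rangle$, the element $a$ is nontrivial.
   Context: Commutator convention: $[x,y]=x^{-1}y^{-1}xy$, so $[a^p,b]=a^{-p}b^{-1}a^pb$. *)

theory Defs
  imports "HOL-Computational_Algebra.Primes"
begin

(* A letter is (x, False) = generator x, or (x, True) = its inverse x^{-1}.
   Elements of the presented group are words modulo the congruence generated
   by free cancellation and deletion of relators (in any position). *)

type_synonym 'g letter = "'g \<times> bool"
type_synonym 'g word = "'g letter list"

definition inv_letter :: "'g letter \<Rightarrow> 'g letter" where
  "inv_letter l = (fst l, \<not> snd l)"

definition inv_word :: "'g word \<Rightarrow> 'g word" where
  "inv_word w = rev (map inv_letter w)"

definition gen :: "'g \<Rightarrow> 'g word" where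
  "gen x = [(x, False)]"

definition wpow :: "'g word \<Rightarrow> nat \<Rightarrow> 'g word" where
  "wpow w n = concat (replicate n w)"

(* commutator convention [x,y] = x^{-1} y^{-1} x y *)
definition wcomm :: "'g word \<Rightarrow> 'g word \<Rightarrow> 'g word" where
  "wcomm x y = inv_word x @ inv_word y @ x @ y"

inductive pres_eq :: "'g word set \<Rightarrow> 'g word \<Rightarrow> 'g word \<Rightarrow> bool" for R where
  refl: "pres_eq R u u"
| sym: "pres_eq R u v \<Longrightarrow> pres_eq R v u"
| trans: "pres_eq R u v \<Longrightarrow> pres_eq R v w \<Longrightarrow> pres_eq R u w"
| cancel: "pres_eq R (u @ [l, inv_letter l] @ v) (u @ v)"
| relator: "r \<in> R \<Longrightarrow> pres_eq R (u @ r @ v) (u @ v)"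

(* H = < a, b | a [a^p, b], b^p >, with a = generator 0, b = generator 1 *)
definition H_rels :: "nat \<Rightarrow> nat word set" where
  "H_rels p = { gen 0 @ wcomm (wpow (gen 0) p) (gen 1), wpow (gen 1) p }"

end

theory Submission
  imports Defs "HOL-Number_Theory.Cong"
begin

(* To show that a presented group element is nontrivial it suffices
   to exhibit an action of the free monoid on the letters on some set S in which
   every letter is undone by its inverse letter and every relator acts trivially:
   equal group elements then act identically (lemma pres_eq_action_eq).

   For H = < a, b | a [a^p, b], b^p > we act on the residues {0..<n} by affine
   maps: a acts as x |-> x + 1 and b as x |-> m x (mod n).  Unfolding the
   relators, this is an action of H as soon as
       m m' = 1,   m^p = 1,   m' p = p - 1   (mod n),
   where m' is the inverse of m (lemma affine_act_relators).  Such parameters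
   exist with n = p^p - (p-1)^p >= 2 and m = p / (p - 1) (lemma
   affine_parameters_exist); the only arithmetic needed is p >= 2.  Since a moves
   the residue 0 to 1, a is not trivial in H. *)

(* A word acts on a set through its letters, the rightmost letter first
   (foldr act w). *)

lemma pres_eq_action_eq:
  fixes act :: "'g letter \<Rightarrow> 'a \<Rightarrow> 'a"
  assumes closed: "\<And>l x. x \<in> S \<Longrightarrow> act l x \<in> S"
    and inverse: "\<And>l x. x \<in> S \<Longrightarrow> act l (act (inv_letter l) x) = x"
    and relators: "\<And>r x. r \<in> R \<Longrightarrow> x \<in> S \<Longrightarrow> foldr act r x = x"
    and "pres_eq R u v" and "x \<in> S"
  shows "foldr act u x = foldr act v x"
proof -
  have word_closed: "foldr act w y \<in> S" if "y \<in> S" for w y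
    using that by (induction w) (simp_all add: closed)
  show ?thesis
    using \<open>pres_eq R u v\<close> \<open>x \<in> S\<close>
  proof (induction arbitrary: x rule: pres_eq.induct)
    case (cancel u l v)
    then show ?case by (simp add: inverse word_closed)
  next
    case (relator r u v)
    then show ?case by (simp add: relators word_closed)
  qed simp_all
qed

fun affine_act :: "int \<Rightarrow> int \<Rightarrow> int \<Rightarrow> nat letter \<Rightarrow> int \<Rightarrow> int" where
  "affine_act n m m' (g, inverted) x =
     (if g = 0 then (if inverted then x - 1 else x + 1)
      else if g = 1 then (if inverted then m' * x else m * x)
      else x) mod n"

lemma affine_act_range:
  assumes "x \<in> {0..<n}" shows "affine_act n m m' l x \<in> {0..<n}"
  using assms by (cases l) simp

lemma affine_act_inverse:
  assumes "[m * m' = 1] (mod n)" and "x \<in> {0..<n}"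
  shows "affine_act n m m' l (affine_act n m m' (inv_letter l) x) = x"
proof -
  have "(m * m' * x) mod n = x mod n"
    using assms(1) by (metis cong_def mod_mult_left_eq mult_1)
  moreover have "x mod n = x" using assms(2) by simp
  ultimately show ?thesis
    by (cases l) (auto simp: inv_letter_def mod_simps ac_simps)
qed

lemma affine_act_a_power:
  "x \<in> {0..<n} \<Longrightarrow> (affine_act n m m' (0, False) ^^ k) x = (x + int k) mod n"
  by (induction k) (simp_all add: mod_simps algebra_simps)

lemma affine_act_a_inv_power:
  "x \<in> {0..<n} \<Longrightarrow> (affine_act n m m' (0, True) ^^ k) x = (x - int k) mod n"
  by (induction k) (simp_all add: mod_simps algebra_simps)

lemma affine_act_b_power:
  "x \<in> {0..<n} \<Longrightarrow> (affine_act n m m' (Suc 0, False) ^^ k) x = (m ^ k * x) mod n"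
  by (induction k) (simp_all add: mod_simps ac_simps)

lemma H_rels_explicit:
  "H_rels p = {[(0, False)] @ replicate p (0, True) @ [(1, True)] @ replicate p (0, False) @ [(1, False)],
               replicate p (1, False)}"
proof -
  have "wpow (gen g) k = replicate k (g, False)" for g :: nat and k
    by (simp add: wpow_def gen_def)
  then show ?thesis
    by (simp add: H_rels_def wcomm_def inv_word_def inv_letter_def gen_def)
qed

(* Both relators act trivially under the three congruences on m and m':
   a [a^p, b] sends x to m' (m x + p) - p + 1 = x, and b^p multiplies by m^p = 1. *)
lemma affine_act_relators:
  assumes mm': "[m * m' = 1] (mod n)"
    and m_order: "[m ^ p = 1] (mod n)"
    and m'_p: "[m' * int p = int p - 1] (mod n)"
    and "r \<in> H_rels p" and x: "x \<in> {0..<n}"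
  shows "foldr (affine_act n m m') r x = x"
proof -
  have n: "n > 0" using x by simp
  have "x mod n = x" using x by simp
  consider "r = [(0, False)] @ replicate p (0, True) @ [(1, True)] @ replicate p (0, False) @ [(1, False)]"
    | "r = replicate p (1, False)"
    using \<open>r \<in> H_rels p\<close> by (auto simp: H_rels_explicit)
  then show ?thesis
  proof cases
    case 1
    have closed_form: "foldr (affine_act n m m') r x = (m' * (m * x + int p) - int p + 1) mod n"
      using 1 n by (simp add: affine_act_a_power affine_act_a_inv_power mod_simps)
    have "[m' * (m * x + int p) - int p + 1 = (m * m') * x + m' * int p - int p + 1] (mod n)"
      by (simp add: algebra_simps)
    also have "[(m * m') * x + m' * int p - int p + 1 = 1 * x + (int p - 1) - int p + 1] (mod n)"
      using mm' m'_p by (intro cong_add cong_diff cong_mult) auto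
    finally show ?thesis using closed_form \<open>x mod n = x\<close> by (simp add: cong_def)
  next
    case 2
    have "[m ^ p * x = 1 * x] (mod n)" using m_order by (intro cong_mult) auto
    then show ?thesis using 2 x \<open>x mod n = x\<close> by (simp add: affine_act_b_power cong_def)
  qed
qed

lemma power_succ_diff_ge_2:
  fixes q :: int
  assumes "q \<ge> 1" and "k \<ge> 2"
  shows "(q + 1) ^ k - q ^ k \<ge> 2"
proof -
  obtain j where k: "k = Suc j" and "j \<ge> 1" using assms(2) by (cases k) auto
  have "q ^ j \<le> (q + 1) ^ j" using assms(1) by (intro power_mono) auto
  moreover have "q + 1 \<le> (q + 1) ^ j"
    using assms(1) \<open>j \<ge> 1\<close> power_increasing[of 1 j "q + 1"] by simp
  moreover have "(q + 1) ^ k - q ^ k = (q + 1) ^ j + q * ((q + 1) ^ j - q ^ j)"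
    by (simp add: k algebra_simps)
  moreover have "q * ((q + 1) ^ j - q ^ j) \<ge> 0"
    using assms(1) calculation(1) by simp
  ultimately show ?thesis using assms(1) by linarith
qed

(* (q + 1)^k - q^k = 1 (mod q), so q is invertible modulo it. *)
lemma coprime_power_succ_diff:
  fixes q :: int
  assumes "k \<ge> 1"
  shows "coprime q ((q + 1) ^ k - q ^ k)"
proof -
  have succ: "[(q + 1) ^ k = 1 ^ k] (mod q)" by (intro cong_pow) (simp add: cong_def)
  have pow: "[q ^ k = 0] (mod q)" using assms by (simp add: cong_def)
  have "[1 = (q + 1) ^ k - q ^ k] (mod q)"
    using cong_diff[OF succ pow] by (simp add: cong_sym)
  then have "coprime ((q + 1) ^ k - q ^ k) q" by (rule cong_imp_coprime) simp
  then show ?thesis by (simp add: coprime_commute)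
qed

(* For p >= 2 there are parameters making the affine action an action of H:
   with q = p - 1 and n = p^p - q^p take m = p / q and m' = m^(p-1). *)
lemma affine_parameters_exist:
  assumes "p \<ge> 2"
  obtains n m m' :: int
  where "n \<ge> 2" and "[m * m' = 1] (mod n)" and "[m ^ p = 1] (mod n)"
    and "[m' * int p = int p - 1] (mod n)"
proof -
  define q :: int where "q = int p - 1"
  define n where "n = (q + 1) ^ p - q ^ p"
  have n: "n \<ge> 2" using assms power_succ_diff_ge_2[of q p] by (simp add: n_def q_def)
  obtain u where u: "[q * u = 1] (mod n)"
    using cong_solve_coprime_int coprime_power_succ_diff[of p q] assms by (auto simp: n_def)
  define m where "m = (q + 1) * u"
  define m' where "m' = m ^ (p - 1)"
  have m_order: "[m ^ p = 1] (mod n)"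
  proof -
    have "[(q + 1) ^ p = q ^ p] (mod n)" by (simp add: n_def cong_iff_dvd_diff)
    then have "[m ^ p = (q * u) ^ p] (mod n)"
      unfolding m_def power_mult_distrib by (rule cong_mult) simp
    also have "[(q * u) ^ p = 1 ^ p] (mod n)" using u by (rule cong_pow)
    finally show ?thesis by simp
  qed
  have "m * m' = m ^ p" using assms by (simp add: m'_def power_eq_if)
  then have mm': "[m * m' = 1] (mod n)" using m_order by simp
  have "[m' * int p = m' * (q + 1) * (q * u)] (mod n)"
    using cong_mult[OF cong_refl u, of "m' * (q + 1)"] by (simp add: q_def cong_sym)
  also have "m' * (q + 1) * (q * u) = q * (m * m')" by (simp add: m_def algebra_simps)
  also have "[q * (m * m') = q * 1] (mod n)" using mm' by (rule cong_mult[OF cong_refl])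
  finally have "[m' * int p = int p - 1] (mod n)" by (simp add: q_def)
  with that n mm' m_order show ?thesis by blast
qed

(* a moves the residue 0 to 1 in the affine action of H on {0..<n}, n >= 2;
   oddness and primality of p are only used through p >= 2. *)
theorem mainTheorem10:
  fixes p :: nat
  assumes "prime p" and "odd p"
  shows "\<not> pres_eq (H_rels p) (gen 0) []"
proof
  assume a_trivial: "pres_eq (H_rels p) (gen 0) []"
  have "p \<ge> 2" using assms(1) prime_ge_2_nat by blast
  then obtain n m m' :: int
    where n: "n \<ge> 2" and mm': "[m * m' = 1] (mod n)" and m_order: "[m ^ p = 1] (mod n)"
      and m'_p: "[m' * int p = int p - 1] (mod n)"
    by (rule affine_parameters_exist)
  have "foldr (affine_act n m m') (gen 0) 0 = foldr (affine_act n m m') [] 0"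
  proof (rule pres_eq_action_eq[where S = "{0..<n}"])
    show "\<And>l x. x \<in> {0..<n} \<Longrightarrow> affine_act n m m' l x \<in> {0..<n}"
      by (rule affine_act_range)
    show "\<And>l x. x \<in> {0..<n} \<Longrightarrow> affine_act n m m' l (affine_act n m m' (inv_letter l) x) = x"
      using mm' by (rule affine_act_inverse)
    show "\<And>r x. r \<in> H_rels p \<Longrightarrow> x \<in> {0..<n} \<Longrightarrow> foldr (affine_act n m m') r x = x"
      using mm' m_order m'_p by (rule affine_act_relators)
  qed (use a_trivial n in simp_all)
  then show False using n by (simp add: gen_def)
qed

end
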